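(* Let $b\in\mathbb{R}$, $c>0$, $n\in\mathbb{N}$, and $R_b(x)=\sum_{i=1}^n x_i\ln x_i+b\sum_{i=1}^n x_i$ for $x\in[0,+\infty)^n$ (with $0\ln0=0$). If $b+\ln c-\ln n>1$, then $$\mathrm{Vol}\big(\{x\in[0,+\infty)^n: R_b(x)<c\}\big)\le\frac{1}{n!\,n}\cdot\frac{2^nc^n}{(b+\ln c-\ln n)^n}.$$ *)

theory Defs
  imports "HOL-Analysis.Analysis"
begin

definition xlnx :: "real \<Rightarrow> real" where
  "xlnx t = (if t = 0 then 0 else t * ln t)"

definition Rb :: "real \<Rightarrow> real ^ 'n \<Rightarrow> real" where
  "Rb b x = (\<Sum>i\<in>UNIV. xlnx (x $ i)) + b * (\<Sum>i\<in>UNIV. x $ i)"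

end

theory Submission
  imports Defs
begin

text \<open>
  By the tangent-line bound for \<open>t ln t\<close> (a form of Jensen's inequality), a point with
  coordinate sum \<open>S\<close> has \<open>R\<^sub>b(x) \<ge> S (ln (S/n) + b)\<close>, and the right-hand side is increasing
  in \<open>S\<close> once positive. Hence the sublevel set \<open>R\<^sub>b < c\<close> lies in the simplex
  \<open>x \<ge> 0, \<Sum>x\<^sub>i \<le> s\<close> as soon as \<open>c \<le> s (ln (s/n) + b)\<close>, whose volume is \<open>s\<^sup>n/n!\<close>.
  The radius \<open>s = 2c / (L n\<^bsup>1/n\<^esup>)\<close> with \<open>L = b + ln c - ln n\<close> qualifies, because
  \<open>n\<^bsup>1/n\<^esup> \<le> 3\<^bsup>1/3\<^esup> < 2e/(1+e)\<close>, and it gives exactly the claimed bound.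
\<close>

lemma emeasure_lborel_simplex:
  fixes s :: real
  assumes "0 \<le> s"
  shows "emeasure lborel {x::'a::euclidean_space. (\<forall>i\<in>Basis. 0 \<le> x \<bullet> i) \<and> sum ((\<bullet>) x) Basis \<le> s}
           = ennreal (s ^ DIM('a) / fact DIM('a))"
proof -
  have "emeasure lborel {x::'a. (\<forall>i\<in>Basis. 0 \<le> x \<bullet> i) \<and> sum ((\<bullet>) x) Basis \<le> s} =
        emeasure (distr (Pi\<^sub>M Basis (\<lambda>b. lborel)) borel (\<lambda>f. \<Sum>b\<in>Basis. f b *\<^sub>R b))
          {x::'a. (\<forall>i\<in>Basis. 0 \<le> x \<bullet> i) \<and> sum ((\<bullet>) x) Basis \<le> s}"
    by (subst lborel_eq) simp
  also have "\<dots> = emeasure (Pi\<^sub>M Basis (\<lambda>b. lborel))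
                    ({y :: 'a \<Rightarrow> real. (\<forall>i\<in>Basis. 0 \<le> y i) \<and> sum y Basis \<le> s} \<inter> space (Pi\<^sub>M Basis (\<lambda>b. lborel)))"
    by (subst emeasure_distr) auto
  also have "\<dots> = ennreal (s ^ DIM('a) / fact DIM('a))"
    using assms by (subst emeasure_std_simplex_aux) (auto simp: ennreal_power ennreal_fact divide_ennreal)
  finally show ?thesis .
qed

lemma sum_inner_Basis_vec: "(\<Sum>b\<in>Basis. x \<bullet> b) = (\<Sum>i\<in>UNIV. x $ i)"
  for x :: "real ^ 'n"
proof -
  have Basis: "(Basis :: (real ^ 'n) set) = range (\<lambda>i. axis i 1)"
    unfolding Basis_vec_def by auto
  have "(\<Sum>b\<in>Basis. x \<bullet> b) = (\<Sum>i\<in>UNIV. x \<bullet> axis i 1)"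
    unfolding Basis by (subst sum.reindex) (auto simp: inj_on_def axis_eq_axis)
  then show ?thesis
    by (simp add: cart_eq_inner_axis)
qed

lemma emeasure_lborel_vec_simplex:
  fixes s :: real
  assumes "0 \<le> s"
  shows "emeasure lborel {x :: real ^ 'n. (\<forall>i. 0 \<le> x $ i) \<and> (\<Sum>i\<in>UNIV. x $ i) \<le> s}
           = ennreal (s ^ CARD('n) / fact CARD('n))"
proof -
  have "{x :: real ^ 'n. (\<forall>i. 0 \<le> x $ i) \<and> (\<Sum>i\<in>UNIV. x $ i) \<le> s}
        = {x. (\<forall>i\<in>Basis. 0 \<le> x \<bullet> i) \<and> sum ((\<bullet>) x) Basis \<le> s}"
    unfolding sum_inner_Basis_vec
    by (auto simp: Basis_vec_def cart_eq_inner_axis[symmetric] inner_axis)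
  then show ?thesis
    using emeasure_lborel_simplex[OF assms, where 'a = "real ^ 'n"] by simp
qed

lemma xlnx_ge_tangent:
  fixes y a :: real
  assumes "0 \<le> y" "0 < a"
  shows "y * ln a + y - a \<le> xlnx y"
proof (cases "y = 0")
  case True
  then show ?thesis using assms by (simp add: xlnx_def)
next
  case False
  then have y: "0 < y" using assms by simp
  have "ln a - ln y \<le> a / y - 1"
    using ln_le_minus_one[of "a / y"] y assms by (simp add: ln_div)
  then have "y * (ln a - ln y) \<le> y * (a / y - 1)"
    using y by (intro mult_left_mono) auto
  then show ?thesis
    using False y by (simp add: xlnx_def algebra_simps)
qed

lemma sum_xlnx_ge:
  fixes x :: "'i \<Rightarrow> real"
  assumes "finite I" "I \<noteq> {}" "\<And>i. i \<in> I \<Longrightarrow> 0 \<le> x i"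
  shows "sum x I * ln (sum x I / card I) \<le> (\<Sum>i\<in>I. xlnx (x i))"
proof (cases "sum x I = 0")
  case True
  then have "\<forall>i\<in>I. x i = 0"
    using assms by (simp add: sum_nonneg_eq_0_iff)
  then show ?thesis
    using True by (simp add: xlnx_def)
next
  case False
  define a where "a = sum x I / card I"
  have "0 < a"
    using False assms sum_nonneg[of I x] by (simp add: a_def card_gt_0_iff)
  have "sum x I * ln a = (\<Sum>i\<in>I. x i * ln a + x i - a)"
    using assms by (simp add: a_def sum.distrib sum_subtractf sum_distrib_right)
  also have "\<dots> \<le> (\<Sum>i\<in>I. xlnx (x i))"
    using assms \<open>0 < a\<close> by (intro sum_mono xlnx_ge_tangent) auto
  finally show ?thesis
    by (simp add: a_def)
qed

lemma Rb_ge_sum_ln: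
  fixes x :: "real ^ 'n"
  assumes "\<forall>i. 0 \<le> x $ i"
  defines "S \<equiv> \<Sum>i\<in>UNIV. x $ i"
  shows "S * (ln (S / CARD('n)) + b) \<le> Rb b x"
  using sum_xlnx_ge[of UNIV "\<lambda>i. x $ i"] assms
  by (simp add: Rb_def distrib_left mult.commute)

lemma Rb_sublevel_subset_simplex:
  fixes b c s :: real
  assumes "0 < c" "0 < s" "c \<le> s * (ln (s / CARD('n)) + b)"
  shows "{x :: real ^ 'n. (\<forall>i. 0 \<le> x $ i) \<and> Rb b x < c}
           \<subseteq> {x. (\<forall>i. 0 \<le> x $ i) \<and> (\<Sum>i\<in>UNIV. x $ i) \<le> s}"
proof safe
  fix x :: "real ^ 'n"
  assume x: "\<forall>i. 0 \<le> x $ i" and "Rb b x < c"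
  define S where "S = (\<Sum>i\<in>UNIV. x $ i)"
  define K where "K = ln (s / CARD('n)) + b"
  have c_le: "c \<le> s * K"
    using assms(3) by (simp add: K_def)
  then have "0 < K"
    using assms(1,2) by (smt (verit) mult_nonneg_nonpos)
  show "S \<le> s"
  proof (rule ccontr)
    assume "\<not> S \<le> s"
    then have "s < S" by simp
    then have "c < S * K"
      using c_le \<open>0 < K\<close> by (meson mult_strict_right_mono order_le_less_trans)
    also have "\<dots> \<le> S * (ln (S / CARD('n)) + b)"
      using \<open>s < S\<close> \<open>0 < s\<close> unfolding K_def by (intro mult_left_mono add_right_mono ln_mono divide_right_mono) auto
    also have "\<dots> \<le> Rb b x"
      using Rb_ge_sum_ln[OF x] by (simp add: S_def)
    finally show False
      using \<open>Rb b x < c\<close> by simp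
  qed
qed

lemma of_nat_le_power_29_20: "real n \<le> (29/20) ^ n"
proof (induction n)
  case (Suc n)
  show ?case
  proof (cases "n \<le> 2")
    case True
    then have "n = 0 \<or> n = 1 \<or> n = 2" by auto
    then show ?thesis by (auto simp: numeral_eq_Suc)
  next
    case False
    then have "real (Suc n) \<le> 29/20 * real n" by simp
    also have "\<dots> \<le> 29/20 * (29/20) ^ n" using Suc.IH by simp
    finally show ?thesis by simp
  qed
qed simp

lemma root_self_le: "root n (real n) \<le> 29/20"
proof (cases "n = 0")
  case False
  then have "root n (real n) \<le> root n ((29/20) ^ n)"
    using of_nat_le_power_29_20 by simp
  also have "\<dots> = 29/20"
    using False by (simp add: real_root_power_cancel)
  finally show ?thesis .
qed simp

text \<open>Add \<open>ln x \<le> x - 1\<close> at \<open>x = L(2 - t)/2\<close> to \<open>ln t \<le> 1 + ln (2 - t)\<close>; the latter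
  holds because \<open>t \<le> 29/20 < 2e/(1+e)\<close>.\<close>
lemma mult_le_ln_gap_bound:
  fixes L t :: real
  assumes "0 < L" "1 \<le> t" "t \<le> 29/20"
  shows "L * t \<le> 2 * (L + ln 2 - ln L - ln t)"
proof -
  have "0 < 2 - t" using assms by simp
  have "ln (L * (2 - t) / 2) \<le> L * (2 - t) / 2 - 1"
    using assms \<open>0 < 2 - t\<close> by (intro ln_le_minus_one) simp
  then have ln_L: "ln L + ln (2 - t) - ln 2 \<le> L * (2 - t) / 2 - 1"
    using assms \<open>0 < 2 - t\<close> by (simp add: ln_div ln_mult)
  have "t \<le> 2718/1000 * (2 - t)" using assms by simp
  also have "\<dots> \<le> exp 1 * (2 - t)"
    using abs_le_D2[OF e_approx_32] \<open>0 < 2 - t\<close> by (intro mult_right_mono) auto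
  finally have "ln t \<le> ln (exp 1 * (2 - t))"
    using assms by simp
  then have ln_t: "ln t \<le> 1 + ln (2 - t)"
    using \<open>0 < 2 - t\<close> by (simp add: ln_mult)
  show ?thesis using ln_L ln_t by (simp add: algebra_simps)
qed

lemma simplex_radius_admissible:
  fixes b c L N t :: real
  assumes "0 < c" "0 < N" "L = b + ln c - ln N" "0 < L" "1 \<le> t" "t \<le> 29/20"
  defines "s \<equiv> 2 * c / (L * t)"
  shows "c \<le> s * (ln (s / N) + b)"
proof -
  have "0 < s" using assms by (simp add: s_def)
  have "c = s * (L * t / 2)"
    using assms by (simp add: s_def)
  also have "\<dots> \<le> s * (L + ln 2 - ln L - ln t)"
    using mult_le_ln_gap_bound[OF assms(4-6)] \<open>0 < s\<close> by (intro mult_left_mono) auto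
  also have "L + ln 2 - ln L - ln t = ln (s / N) + b"
    using assms by (simp add: s_def ln_div ln_mult)
  finally show ?thesis .
qed

theorem lemma12:
  fixes b c :: real
  assumes "c > 0"
    and "b + ln c - ln (real CARD('n::finite)) > 1"
  shows "emeasure lborel {x :: real ^ 'n. (\<forall>i. 0 \<le> x $ i) \<and> Rb b x < c}
     \<le> ennreal (1 / (fact CARD('n) * real CARD('n)) *
          (2 ^ CARD('n) * c ^ CARD('n) / (b + ln c - ln (real CARD('n))) ^ CARD('n)))"
proof -
  define n where "n = CARD('n)"
  define L where "L = b + ln c - ln n"
  define t where "t = root n n"
  define s where "s = 2 * c / (L * t)"
  have "0 < n" by (simp add: n_def)
  have "1 \<le> t" "t ^ n = n" "0 < L"
    using \<open>0 < n\<close> assms(2) by (auto simp: t_def L_def n_def real_root_pow_pos2)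
  have "0 < s" using assms(1) \<open>0 < L\<close> \<open>1 \<le> t\<close> by (simp add: s_def)
  have "c \<le> s * (ln (s / n) + b)"
    unfolding s_def using assms(1) \<open>0 < n\<close> L_def \<open>0 < L\<close> \<open>1 \<le> t\<close> root_self_le[of n]
    by (intro simplex_radius_admissible) (auto simp: t_def)
  then have "emeasure lborel {x :: real ^ 'n. (\<forall>i. 0 \<le> x $ i) \<and> Rb b x < c}
             \<le> emeasure lborel {x :: real ^ 'n. (\<forall>i. 0 \<le> x $ i) \<and> (\<Sum>i\<in>UNIV. x $ i) \<le> s}"
    using Rb_sublevel_subset_simplex[of c s b] assms(1) \<open>0 < s\<close>
    by (intro emeasure_mono) (auto simp: n_def)
  also have "\<dots> = ennreal (s ^ n / fact n)"
    using emeasure_lborel_vec_simplex[where 'n = 'n] \<open>0 < s\<close> by (simp add: n_def)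
  also have "s ^ n = 2 ^ n * c ^ n / (L ^ n * n)"
    unfolding s_def power_divide power_mult_distrib \<open>t ^ n = n\<close> ..
  then have "s ^ n / fact n = 1 / (fact n * real n) * (2 ^ n * c ^ n / L ^ n)"
    by simp
  finally show ?thesis unfolding n_def L_def .
qed

end
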